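(* Let $n\ge 2$, $K_n=(V,E)$ the complete graph, and $M_1,M_2$ matchings in $K_n$. If the graph $(V, M_1\triangle M_2)$ has a single non-trivial connected component (a component with more than one node), then $\bm{c}=\chi(M_1)-\chi(M_2)$ is a circuit of the Matching polytope $P_{\mathrm{match}}(n)=\operatorname{conv}\{\chi(M): M\text{ a matching in }K_n\}$, with circuits taken with respect to the linear description $$\bm{x}(E[S])\le (|S|-1)/2 \ \text{for all } S\subseteq V,\ |S| \text{ odd},\ |S|\ge 3;\quad \bm{x}(\delta(v))\le 1\ \text{for all } v\in V;\quad \bm{x}\ge \bm{0}.$$
   Context: $\chi(M)\in\{0,1\}^E$ is the characteristic vector of $M$; $\triangle$ is symmetric difference; $E[S]$ is the set of edges with both endpoints in $S$, $\delta(v)$ the set of edges incident to $v$, $\bm{x}(F)=\sum_{e\in F}x_e$. Circuits: for a polytope $P=\{\bm{x}: B\bm{x}\le \bm{d}\}$ given by a fixed linear system, a nonzero vector $\bm{g}$ is a circuit of $P$ if $\operatorname{supp}(B\bm{g})$ is inclusion-minimal among the sets $\operatorname{supp}(B\bm{y})$ with $\bm{y}\neq\bm{0}$. *)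

theory Defs
  imports "HOL-Analysis.Analysis"
begin

definition Kverts :: "nat \<Rightarrow> nat set" where
  "Kverts n = {..<n}"

definition Kedges :: "nat \<Rightarrow> nat set set" where
  "Kedges n = {e. \<exists>u v. u < n \<and> v < n \<and> u \<noteq> v \<and> e = {u, v}}"

definition is_matching :: "nat \<Rightarrow> nat set set \<Rightarrow> bool" where
  "is_matching n M \<longleftrightarrow> M \<subseteq> Kedges n \<and>
     (\<forall>e\<in>M. \<forall>f\<in>M. e \<noteq> f \<longrightarrow> e \<inter> f = {})"

definition chi :: "nat set set \<Rightarrow> nat set \<Rightarrow> real" where
  "chi M e = (if e \<in> M then 1 else 0)"

definition inner_edges :: "nat \<Rightarrow> nat set \<Rightarrow> nat set set" where
  "inner_edges n S = {e \<in> Kedges n. e \<subseteq> S}"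

definition delta :: "nat \<Rightarrow> nat \<Rightarrow> nat set set" where
  "delta n v = {e \<in> Kedges n. v \<in> e}"

text \<open>Vectors in R^E: real functions on edges vanishing outside E.\<close>
definition edge_vecs :: "nat \<Rightarrow> (nat set \<Rightarrow> real) set" where
  "edge_vecs n = {x. \<forall>e. e \<notin> Kedges n \<longrightarrow> x e = 0}"

text \<open>Rows of the linear description B x \<le> d of the matching polytope.\<close>
datatype row = OddSetRow "nat set" | DegRow nat | NonnegRow "nat set"

definition match_rows :: "nat \<Rightarrow> row set" where
  "match_rows n =
     {OddSetRow S | S. S \<subseteq> Kverts n \<and> odd (card S) \<and> card S \<ge> 3}
     \<union> {DegRow v | v. v \<in> Kverts n}
     \<union> {NonnegRow e | e. e \<in> Kedges n}"

text \<open>The row r of B applied to x  (nonnegativity x_e \<ge> 0 written as -x_e \<le> 0).\<close>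
fun Bmul :: "nat \<Rightarrow> (nat set \<Rightarrow> real) \<Rightarrow> row \<Rightarrow> real" where
  "Bmul n x (OddSetRow S) = sum x (inner_edges n S)"
| "Bmul n x (DegRow v) = sum x (delta n v)"
| "Bmul n x (NonnegRow e) = - x e"

fun rhs :: "row \<Rightarrow> real" where
  "rhs (OddSetRow S) = (real (card S) - 1) / 2"
| "rhs (DegRow v) = 1"
| "rhs (NonnegRow e) = 0"

definition supp_B :: "nat \<Rightarrow> (nat set \<Rightarrow> real) \<Rightarrow> row set" where
  "supp_B n y = {r \<in> match_rows n. Bmul n y r \<noteq> 0}"

definition is_circuit :: "nat \<Rightarrow> (nat set \<Rightarrow> real) \<Rightarrow> bool" where
  "is_circuit n g \<longleftrightarrow> g \<in> edge_vecs n \<and> g \<noteq> (\<lambda>_. 0) \<and>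
     (\<forall>y \<in> edge_vecs n. y \<noteq> (\<lambda>_. 0) \<longrightarrow> \<not> (supp_B n y \<subset> supp_B n g))"

definition reach :: "nat set set \<Rightarrow> nat \<Rightarrow> nat \<Rightarrow> bool" where
  "reach F = (\<lambda>u v. {u, v} \<in> F)\<^sup>*\<^sup>*"

definition components :: "nat \<Rightarrow> nat set set \<Rightarrow> nat set set" where
  "components n F = {{w \<in> Kverts n. reach F u w} | u. u \<in> Kverts n}"

definition nontrivial_components :: "nat \<Rightarrow> nat set set \<Rightarrow> nat set set" where
  "nontrivial_components n F = {C \<in> components n F. card C > 1}"

end

theory Submission
  imports Defs
begin

text \<open>Let \<open>D = M\<^sub>1 \<triangle> M\<^sub>2\<close> and \<open>g = \<chi>(M\<^sub>1) - \<chi>(M\<^sub>2)\<close>. If \<open>supp(By) \<subseteq> supp(Bg)\<close>, the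
  nonnegativity rows force \<open>y\<close> to vanish off \<open>D\<close>. At a vertex met by two edges of \<open>D\<close> these
  come from different matchings, so \<open>g\<close> has degree sum \<open>0\<close> there and, by the degree rows, so
  does \<open>y\<close>; thus \<open>y/g\<close> is constant along paths of \<open>D\<close>. As the edges of \<open>D\<close> form a single
  connected component, \<open>y\<close> is a nonzero multiple of \<open>g\<close>, whence \<open>supp(By) = supp(Bg)\<close>.\<close>

lemma finite_Kedges: "finite (Kedges n)"
proof -
  have "Kedges n \<subseteq> Pow {..<n}" by (auto simp: Kedges_def)
  then show ?thesis by (rule finite_subset) simp
qed

lemma finite_delta: "finite (delta n v)"
  using finite_Kedges by (rule finite_subset[rotated]) (auto simp: delta_def)

lemma supp_B_scale:
  assumes "t \<noteq> 0"
  shows "supp_B n (\<lambda>e. t * g e) = supp_B n g"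
proof -
  have "Bmul n (\<lambda>e. t * g e) r = t * Bmul n g r" for r
    by (cases r) (auto simp: sum_distrib_left)
  then show ?thesis using assms by (simp add: supp_B_def)
qed

lemma is_circuitI:
  assumes "g \<in> edge_vecs n" and "g \<noteq> (\<lambda>_. 0)"
    and multiple: "\<And>y. y \<in> edge_vecs n \<Longrightarrow> supp_B n y \<subseteq> supp_B n g \<Longrightarrow> \<exists>t. y = (\<lambda>e. t * g e)"
  shows "is_circuit n g"
  unfolding is_circuit_def
proof (intro conjI assms ballI impI notI)
  fix y assume "y \<in> edge_vecs n" "y \<noteq> (\<lambda>_. 0)" and strict: "supp_B n y \<subset> supp_B n g"
  then obtain t where y: "y = (\<lambda>e. t * g e)" using multiple by blast
  with \<open>y \<noteq> (\<lambda>_. 0)\<close> have "t \<noteq> 0" by auto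
  then have "supp_B n y = supp_B n g" unfolding y by (rule supp_B_scale)
  with strict show False by simp
qed

lemma supp_B_subset_zero_edge:
  assumes "y \<in> edge_vecs n" and "supp_B n y \<subseteq> supp_B n g" and "g e = 0"
  shows "y e = 0"
proof (cases "e \<in> Kedges n")
  case True
  then have "NonnegRow e \<in> match_rows n" by (auto simp: match_rows_def)
  with assms(2,3) show ?thesis by (auto simp: supp_B_def)
qed (use assms(1) in \<open>auto simp: edge_vecs_def\<close>)

lemma supp_B_subset_zero_degree:
  assumes "supp_B n y \<subseteq> supp_B n g" and "v < n" and "sum g (delta n v) = 0"
  shows "sum y (delta n v) = 0"
proof -
  have "DegRow v \<in> match_rows n" using assms(2) by (auto simp: match_rows_def Kverts_def)
  with assms(1,3) show ?thesis by (auto simp: supp_B_def)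
qed

lemma Kedges_vertex_less: "e \<in> Kedges n \<Longrightarrow> v \<in> e \<Longrightarrow> v < n"
  by (auto simp: Kedges_def)

lemma sym_diff_matchings_subset_Kedges:
  "is_matching n M1 \<Longrightarrow> is_matching n M2 \<Longrightarrow> sym_diff M1 M2 \<subseteq> Kedges n"
  by (auto simp: is_matching_def)

lemma chi_diff_eq_0_iff: "chi M1 e - chi M2 e = 0 \<longleftrightarrow> e \<notin> sym_diff M1 M2"
  by (auto simp: chi_def)

lemma sym_diff_matchings_adjacent:
  assumes "is_matching n M1" and "is_matching n M2"
    and "e \<in> sym_diff M1 M2" "f \<in> sym_diff M1 M2" "e \<noteq> f" "v \<in> e" "v \<in> f"
  shows "(e \<in> M1 - M2 \<and> f \<in> M2 - M1) \<or> (e \<in> M2 - M1 \<and> f \<in> M1 - M2)"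
    and "delta n v \<inter> sym_diff M1 M2 = {e, f}"
proof -
  have disj1: "\<And>h k. h \<in> M1 \<Longrightarrow> k \<in> M1 \<Longrightarrow> v \<in> h \<Longrightarrow> v \<in> k \<Longrightarrow> h = k"
    and disj2: "\<And>h k. h \<in> M2 \<Longrightarrow> k \<in> M2 \<Longrightarrow> v \<in> h \<Longrightarrow> v \<in> k \<Longrightarrow> h = k"
    using assms(1,2) unfolding is_matching_def by blast+
  show alt: "(e \<in> M1 - M2 \<and> f \<in> M2 - M1) \<or> (e \<in> M2 - M1 \<and> f \<in> M1 - M2)"
    using assms(3-7) disj1[of e f] disj2[of e f] by blast
  have "e \<in> Kedges n" "f \<in> Kedges n"
    using assms(1-4) by (auto simp: is_matching_def)
  with alt assms(6,7) show "delta n v \<inter> sym_diff M1 M2 = {e, f}"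
    unfolding delta_def using disj1 disj2 by blast
qed

lemma sum_delta_two_edges:
  assumes "\<And>h. h \<notin> D \<Longrightarrow> x h = 0" and "delta n v \<inter> D = {e, f}" and "e \<noteq> f"
  shows "sum x (delta n v) = x e + x f"
proof -
  have "sum x (delta n v) = sum x (delta n v \<inter> D)"
    by (rule sum.mono_neutral_right) (use finite_delta assms(1) in auto)
  with assms(2,3) show ?thesis by simp
qed

lemma reach_propagates_along_edges:
  assumes step: "\<And>e f v. e \<in> F \<Longrightarrow> f \<in> F \<Longrightarrow> v \<in> e \<Longrightarrow> v \<in> f \<Longrightarrow> P e \<Longrightarrow> P f"
    and "e0 \<in> F" "a \<in> e0" "P e0" and "reach F a w"
  shows "\<forall>f\<in>F. w \<in> f \<longrightarrow> P f"
  using \<open>reach F a w\<close> unfolding reach_def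
proof (induction rule: rtranclp_induct)
  case base
  then show ?case using step assms(2-4) by blast
next
  case (step w w')
  then have "P {w, w'}" by blast
  with step.hyps(2) show ?case using assms(1)[of "{w, w'}" _ w'] by blast
qed

lemma Kedges_doubleton: "{p, q} \<in> Kedges n \<Longrightarrow> p < n \<and> q < n \<and> p \<noteq> q"
  unfolding Kedges_def by (auto simp: doubleton_eq_iff)

lemma component_of_edge_nontrivial:
  assumes "F \<subseteq> Kedges n" and "{p, q} \<in> F"
  shows "{w \<in> Kverts n. reach F p w} \<in> nontrivial_components n F"
proof -
  let ?K = "{w \<in> Kverts n. reach F p w}"
  from assms have pq: "p < n" "q < n" "p \<noteq> q" using Kedges_doubleton by blast+
  have "reach F p p" "reach F p q"
    using assms(2) unfolding reach_def by auto
  with pq have "{p, q} \<subseteq> ?K" "finite ?K" by (auto simp: Kverts_def)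
  then have "card {p, q} \<le> card ?K" by (rule card_mono[rotated])
  with pq show ?thesis
    by (auto simp: nontrivial_components_def components_def Kverts_def)
qed

lemma nontrivial_component_has_edge:
  assumes "C \<in> nontrivial_components n F"
  shows "\<exists>u v. {u, v} \<in> F"
proof -
  from assms obtain c where C: "C = {w \<in> Kverts n. reach F c w}" and "card C > 1"
    by (auto simp: nontrivial_components_def components_def)
  then have "\<not> C \<subseteq> {c}" using card_mono[of "{c}" C] by auto
  then obtain w where "reach F c w" "c \<noteq> w" using C by auto
  then obtain z where "{c, z} \<in> F" unfolding reach_def by (auto elim: converse_rtranclpE)
  then show ?thesis by blast
qed

lemma reach_single_nontrivial_component:
  assumes "nontrivial_components n F = {C}" and "F \<subseteq> Kedges n"
    and "{a, b} \<in> F" "{p, q} \<in> F"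
  shows "reach F a p"
proof -
  have "{w \<in> Kverts n. reach F a w} = C" "{w \<in> Kverts n. reach F p w} = C"
    using component_of_edge_nontrivial[OF assms(2)] assms(1,3,4) by simp_all
  moreover have "p < n" using assms(2,4) Kedges_doubleton by blast
  then have "p \<in> {w \<in> Kverts n. reach F p w}" by (simp add: Kverts_def reach_def)
  ultimately show ?thesis by blast
qed

lemma proportional_to_alternating_vector:
  assumes "is_matching n M1" and "is_matching n M2"
    and component: "nontrivial_components n (sym_diff M1 M2) = {C}"
    and off: "\<And>h. h \<notin> sym_diff M1 M2 \<Longrightarrow> y h = 0"
    and balanced: "\<And>e f v. e \<in> sym_diff M1 M2 \<Longrightarrow> f \<in> sym_diff M1 M2 \<Longrightarrow>
      e \<noteq> f \<Longrightarrow> v \<in> e \<Longrightarrow> v \<in> f \<Longrightarrow> y e + y f = 0"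
  shows "\<exists>t. y = (\<lambda>e. t * (chi M1 e - chi M2 e))"
proof -
  define D where "D = sym_diff M1 M2"
  define g where "g e = chi M1 e - chi M2 e" for e
  have DE: "D \<subseteq> Kedges n" using sym_diff_matchings_subset_Kedges[OF assms(1,2)] D_def by simp
  obtain a b where ab: "{a, b} \<in> D"
    using nontrivial_component_has_edge component unfolding D_def by blast
  define t where "t = y {a, b} / g {a, b}"
  let ?P = "\<lambda>f. y f = t * g f"
  have step: "?P f" if "e \<in> D" "f \<in> D" "v \<in> e" "v \<in> f" "?P e" for e f v
  proof (cases "e = f")
    case False
    have "g f = - g e"
      using sym_diff_matchings_adjacent(1)[OF assms(1,2) that(1,2)[unfolded D_def] False that(3,4)]
      by (auto simp: g_def chi_def)
    moreover have "y f = - y e"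
      using balanced[of e f v] that(1-4) False unfolding D_def by linarith
    ultimately show ?thesis using that(5) by simp
  qed (use that in simp)
  have "?P {a, b}" using ab chi_diff_eq_0_iff by (simp add: t_def g_def D_def)
  then have "?P f" if "f \<in> D" for f
  proof -
    from that DE obtain p q where f: "f = {p, q}" by (auto simp: Kedges_def)
    have "reach D a p"
      using reach_single_nontrivial_component[OF component[folded D_def] DE ab] that f by blast
    with step ab \<open>?P {a, b}\<close> show ?thesis
      using reach_propagates_along_edges[of D ?P] that f by blast
  qed
  moreover have "?P f" if "f \<notin> D" for f
    using that off chi_diff_eq_0_iff unfolding D_def g_def by simp
  ultimately show ?thesis unfolding g_def by blast
qed

lemma supp_B_subset_alternating_vector:
  assumes "is_matching n M1" and "is_matching n M2"
    and component: "nontrivial_components n (sym_diff M1 M2) = {C}"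
    and y: "y \<in> edge_vecs n" and supp: "supp_B n y \<subseteq> supp_B n (\<lambda>e. chi M1 e - chi M2 e)"
  shows "\<exists>t. y = (\<lambda>e. t * (chi M1 e - chi M2 e))"
proof -
  define g where "g = (\<lambda>e. chi M1 e - chi M2 e)"
  have g_off: "g h = 0" if "h \<notin> sym_diff M1 M2" for h
    using that chi_diff_eq_0_iff by (simp add: g_def)
  have y_off: "y h = 0" if "h \<notin> sym_diff M1 M2" for h
    using supp_B_subset_zero_edge[OF y supp[folded g_def] g_off[OF that]] .
  have "y e + y f = 0"
    if "e \<in> sym_diff M1 M2" "f \<in> sym_diff M1 M2" "e \<noteq> f" "v \<in> e" "v \<in> f" for e f v
  proof -
    note adj = sym_diff_matchings_adjacent[OF assms(1,2) that]
    have "v < n"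
      using sym_diff_matchings_subset_Kedges[OF assms(1,2)] that(1,4) Kedges_vertex_less by blast
    moreover have "sum g (delta n v) = g e + g f" using sum_delta_two_edges[OF g_off adj(2) that(3)] .
    moreover have "g e + g f = 0" using adj(1) by (auto simp: g_def chi_def)
    ultimately have "sum y (delta n v) = 0"
      using supp_B_subset_zero_degree[OF supp[folded g_def]] by simp
    then show ?thesis using sum_delta_two_edges[OF y_off adj(2) that(3)] by simp
  qed
  from proportional_to_alternating_vector[OF assms(1-3) y_off this] show ?thesis .
qed

theorem corollary1:
  fixes n :: nat and M1 M2 :: "nat set set"
  assumes "n \<ge> 2"
    and "is_matching n M1" and "is_matching n M2"
    and "\<exists>C. nontrivial_components n (M1 - M2 \<union> (M2 - M1)) = {C}"
  shows "is_circuit n (\<lambda>e. chi M1 e - chi M2 e)"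
proof (rule is_circuitI)
  from assms(4) obtain C where C: "nontrivial_components n (sym_diff M1 M2) = {C}" by blast
  then obtain u v where "{u, v} \<in> sym_diff M1 M2" by (blast dest: nontrivial_component_has_edge)
  then have "chi M1 {u, v} - chi M2 {u, v} \<noteq> 0" by (simp only: chi_diff_eq_0_iff not_not)
  then show "(\<lambda>e. chi M1 e - chi M2 e) \<noteq> (\<lambda>_. 0)" by (auto simp: fun_eq_iff)
  from sym_diff_matchings_subset_Kedges[OF assms(2,3)] show "(\<lambda>e. chi M1 e - chi M2 e) \<in> edge_vecs n"
    using chi_diff_eq_0_iff by (auto simp: edge_vecs_def)
  show "\<exists>t. y = (\<lambda>e. t * (chi M1 e - chi M2 e))"
    if "y \<in> edge_vecs n" and "supp_B n y \<subseteq> supp_B n (\<lambda>e. chi M1 e - chi M2 e)" for y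
    using supp_B_subset_alternating_vector[OF assms(2,3) C that] .
qed

end
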